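(* Let $\mathcal{H}=(V,E)$ be a linear hypergraph without loop, with $n$ vertices, such that $\Delta(\mathcal{H})\le \sqrt{n}+1$. Then $\mathrm{q}(\mathcal{H})\le n$.
   Context: A hypergraph $\mathcal{H}=(V,E)$ has a finite vertex set $V$ and a finite set $E$ of nonempty subsets of $V$ (hyperedges); a loop is a hyperedge with one element; linear means distinct hyperedges share at most one vertex. $\Delta(\mathcal{H})$ is the maximum number of hyperedges containing a vertex. The chromatic index $\mathrm{q}(\mathcal{H})$ is the least number of colors in a coloring of hyperedges where distinct intersecting hyperedges get different colors. *)

theory Defs
  imports Complex_Main
begin

definition hypergraph :: "'a set \<Rightarrow> 'a set set \<Rightarrow> bool" where
  "hypergraph V E \<longleftrightarrow> finite V \<and> (\<forall>e\<in>E. e \<noteq> {} \<and> e \<subseteq> V)"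

definition loopless :: "'a set set \<Rightarrow> bool" where
  "loopless E \<longleftrightarrow> (\<forall>e\<in>E. card e \<noteq> 1)"

definition linear_hg :: "'a set set \<Rightarrow> bool" where
  "linear_hg E \<longleftrightarrow> (\<forall>e\<in>E. \<forall>f\<in>E. e \<noteq> f \<longrightarrow> card (e \<inter> f) \<le> 1)"

definition hdegree :: "'a set set \<Rightarrow> 'a \<Rightarrow> nat" where
  "hdegree E v = card {e\<in>E. v \<in> e}"

text \<open>Maximum degree (0 for the empty vertex set).\<close>
definition max_degree :: "'a set \<Rightarrow> 'a set set \<Rightarrow> nat" where
  "max_degree V E = Sup (hdegree E ` V)"

definition proper_edge_colouring :: "'a set set \<Rightarrow> nat \<Rightarrow> ('a set \<Rightarrow> nat) \<Rightarrow> bool" where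
  "proper_edge_colouring E k c \<longleftrightarrow> (\<forall>e\<in>E. c e < k) \<and>
     (\<forall>e\<in>E. \<forall>f\<in>E. e \<noteq> f \<and> e \<inter> f \<noteq> {} \<longrightarrow> c e \<noteq> c f)"

definition chromatic_index :: "'a set set \<Rightarrow> nat" where
  "chromatic_index E = (LEAST k. \<exists>c. proper_edge_colouring E k c)"

end

theory Submission
  imports Defs
begin

text \<open>Let \<open>D + 1\<close> be the maximum degree, so \<open>D\<^sup>2 \<le> n\<close>. An edge \<open>e\<close> meets at most \<open>|e| D\<close>
  other edges, and colouring greedily with \<open>n\<close> colours succeeds unless some nonempty subfamily
  \<open>S\<close> has every edge meeting at least \<open>n\<close> others of \<open>S\<close>. For an edge \<open>e\<close> of minimum size \<open>k\<close>
  in such an \<open>S\<close>, counting the pairs \<open>(u, w)\<close> with \<open>u \<in> e\<close>, \<open>w \<notin> e\<close> on a common edge gives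
  \<open>n (k - 1) \<le> k (n - k)\<close> and \<open>n \<le> k D\<close>, which force \<open>k\<^sup>2 = n\<close> with equality throughout:
  \<open>S\<close> is an affine plane of order \<open>k\<close>, hence equal to \<open>E\<close> by linearity. An affine plane with
  \<open>D \<le> k\<close> is coloured by the \<open>k + 1\<close> lines through a fixed point \<open>p\<close>, each edge receiving a
  line through \<open>p\<close> that equals or misses it: two edges meeting in \<open>v\<close> and missing the same
  line \<open>l\<close> would, with the \<open>k\<close> lines joining \<open>v\<close> to \<open>l\<close>, give \<open>v\<close> degree at least \<open>k + 2\<close>.\<close>

definition conflicts :: "'a set set \<Rightarrow> 'a set \<Rightarrow> 'a set set" where
  "conflicts S e = {f\<in>S. f \<noteq> e \<and> f \<inter> e \<noteq> {}}"

definition covers_pairs :: "'a set \<Rightarrow> 'a set set \<Rightarrow> bool" where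
  "covers_pairs V S \<longleftrightarrow> (\<forall>v\<in>V. \<forall>w\<in>V. v \<noteq> w \<longrightarrow> (\<exists>g\<in>S. v \<in> g \<and> w \<in> g))"

lemma chromatic_index_le:
  assumes "proper_edge_colouring E k c"
  shows "chromatic_index E \<le> k"
  unfolding chromatic_index_def using assms by (intro Least_le) blast

lemma hdegree_le_max_degree:
  assumes "finite V" "v \<in> V"
  shows "hdegree E v \<le> max_degree V E"
  unfolding max_degree_def using assms by (intro le_cSup_finite) auto

lemma pred_square_le_if_le_sqrt_plus_1:
  fixes d n :: nat
  assumes "real d \<le> sqrt (real n) + 1"
  shows "(d - 1) * (d - 1) \<le> n"
proof -
  have "real (d - 1) \<le> sqrt (real n)"
    using assms by (cases "d = 0") (auto simp: of_nat_diff)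
  then have "real (d - 1) ^ 2 \<le> sqrt (real n) ^ 2"
    by (intro power_mono) auto
  then have "real ((d - 1) * (d - 1)) \<le> real n"
    by (simp add: power2_eq_square)
  then show ?thesis
    by (simp only: of_nat_le_iff)
qed

lemma proper_edge_colouring_relabel:
  assumes "finite L" "card L \<le> k" "\<And>e. e \<in> E \<Longrightarrow> lab e \<in> L"
    and "\<And>e f. e \<in> E \<Longrightarrow> f \<in> E \<Longrightarrow> e \<noteq> f \<Longrightarrow> e \<inter> f \<noteq> {} \<Longrightarrow> lab e \<noteq> lab f"
  shows "\<exists>c. proper_edge_colouring E k c"
proof -
  obtain g where g: "bij_betw g L {0..<card L}"
    using ex_bij_betw_finite_nat[OF assms(1)] by blast
  have "proper_edge_colouring E k (g \<circ> lab)"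
    unfolding proper_edge_colouring_def
  proof (intro conjI ballI impI)
    fix e assume "e \<in> E"
    then show "(g \<circ> lab) e < k"
      using g assms(2,3) bij_betw_apply by fastforce
  next
    fix e f assume "e \<in> E" "f \<in> E" "e \<noteq> f \<and> e \<inter> f \<noteq> {}"
    then show "(g \<circ> lab) e \<noteq> (g \<circ> lab) f"
      using assms(3,4) inj_on_eq_iff[OF bij_betw_imp_inj_on[OF g]] by fastforce
  qed
  then show ?thesis by blast
qed

lemma proper_edge_colouring_extend:
  assumes "proper_edge_colouring (S - {e}) k c" "col < k" "col \<notin> c ` conflicts S e"
  shows "proper_edge_colouring S k (c(e := col))"
proof -
  have "c f \<noteq> col" if "f \<in> S" "f \<noteq> e" "f \<inter> e \<noteq> {}" for f
    using assms(3) that unfolding conflicts_def by blast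
  then show ?thesis
    using assms(1,2) unfolding proper_edge_colouring_def by (auto simp: Int_commute)
qed

lemma greedy_edge_colouring:
  assumes "finite E"
    and degenerate: "\<And>S. S \<subseteq> E \<Longrightarrow> S \<noteq> {} \<Longrightarrow> \<exists>e\<in>S. card (conflicts S e) < k"
  shows "\<exists>c. proper_edge_colouring E k c"
proof -
  have "\<exists>c. proper_edge_colouring S k c" if "S \<subseteq> E" for S
    using that
  proof (induction "card S" arbitrary: S rule: less_induct)
    case less
    show ?case
    proof (cases "S = {}")
      case True
      then show ?thesis unfolding proper_edge_colouring_def by auto
    next
      case False
      then obtain e where e: "e \<in> S" "card (conflicts S e) < k"
        using degenerate less.prems by blast
      have "finite S" using assms(1) less.prems finite_subset by blast
      then have "card (S - {e}) < card S" using e(1) by (rule card_Diff1_less)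
      then obtain c where c: "proper_edge_colouring (S - {e}) k c"
        using less.hyps less.prems by blast
      have "finite (conflicts S e)" using \<open>finite S\<close> unfolding conflicts_def by auto
      then have "card (c ` conflicts S e) < card {..<k}"
        using e(2) card_image_le le_less_trans by fastforce
      then have "\<not> {..<k} \<subseteq> c ` conflicts S e"
        using card_mono[OF finite_imageI[OF \<open>finite (conflicts S e)\<close>]] by fastforce
      then obtain col where "col < k" "col \<notin> c ` conflicts S e" by blast
      then show ?thesis using proper_edge_colouring_extend[OF c] by blast
    qed
  qed
  then show ?thesis by blast
qed

lemma double_counting_tight:
  fixes m k n D :: nat
  assumes pairs: "m * (k - 1) \<le> k * (n - k)" and "m \<le> k * D" "n \<le> m" "D * D \<le> n"
    and "2 \<le> k" "k \<le> n"
  shows "k * k = n" "m = n" "m * (k - 1) = k * (n - k)"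
proof -
  have "n * (k - 1) \<le> k * (n - k)"
    using mult_le_mono1[OF \<open>n \<le> m\<close>] pairs by (rule le_trans)
  moreover have "int (n * (k - 1)) = int n * (int k - 1)" "int (k * (n - k)) = int k * (int n - int k)"
    using assms(5,6) by simp_all
  ultimately have "int n * (int k - 1) \<le> int k * (int n - int k)"
    by (metis of_nat_le_iff)
  then have "k * k \<le> n"
    by (simp add: algebra_simps flip: of_nat_mult of_nat_le_iff)
  have "n * n \<le> (k * D) * (k * D)"
    using assms(2,3) mult_le_mono by (meson le_trans)
  also have "\<dots> = (k * k) * (D * D)" by (simp add: algebra_simps)
  also have "\<dots> \<le> (k * k) * n" using assms(4) by simp
  finally have "n \<le> k * k" using assms(5,6) by simp
  with \<open>k * k \<le> n\<close> show "k * k = n" by simp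
  then have "D \<le> k" using assms(4) by (metis power2_eq_square power2_le_imp_le zero_le)
  then show "m = n"
    using assms(2,3) \<open>k * k = n\<close> by (metis le_antisym le_trans mult_le_mono2)
  with \<open>k * k = n\<close> show "m * (k - 1) = k * (n - k)"
    by (simp add: algebra_simps diff_mult_distrib2)
qed

locale linear_loopless_hypergraph =
  fixes V :: "'a set" and E :: "'a set set"
  assumes hypergraph: "hypergraph V E" and loopless: "loopless E" and linear: "linear_hg E"
begin

lemma finite_V: "finite V"
  using hypergraph unfolding hypergraph_def by auto

lemma edge_subset: "e \<in> E \<Longrightarrow> e \<subseteq> V"
  using hypergraph unfolding hypergraph_def by auto

lemma edge_nonempty: "e \<in> E \<Longrightarrow> e \<noteq> {}"
  using hypergraph unfolding hypergraph_def by auto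

lemma finite_edge: "e \<in> E \<Longrightarrow> finite e"
  using edge_subset finite_V finite_subset by blast

lemma finite_E: "finite E"
  using edge_subset finite_V by (meson Pow_iff finite_Pow_iff finite_subset subsetI)

lemma two_le_card_edge: "e \<in> E \<Longrightarrow> 2 \<le> card e"
  using loopless finite_edge edge_nonempty unfolding loopless_def
  by (metis One_nat_def card_0_eq less_2_cases not_less)

lemma edge_has_two_vertices:
  assumes "e \<in> E"
  obtains x y where "x \<in> e" "y \<in> e" "x \<noteq> y"
  using two_le_card_edge[OF assms] by (metis card_2_iff' card_le_Suc_iff numeral_2_eq_2 insert_iff)

lemma edges_eq_if_two_common:
  assumes "e \<in> E" "f \<in> E" "x \<noteq> y" "x \<in> e" "y \<in> e" "x \<in> f" "y \<in> f"
  shows "e = f"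
proof (rule ccontr)
  assume "e \<noteq> f"
  then have "card (e \<inter> f) \<le> 1" using linear assms unfolding linear_hg_def by blast
  moreover have "card {x, y} \<le> card (e \<inter> f)"
    using assms finite_edge by (intro card_mono) auto
  ultimately show False using assms(3) by simp
qed

lemma card_Int_edges:
  assumes "e \<in> E" "f \<in> E" "e \<noteq> f" "e \<inter> f \<noteq> {}"
  shows "card (e \<inter> f) = 1"
proof -
  have "card (e \<inter> f) \<le> 1" using linear assms unfolding linear_hg_def by blast
  moreover have "card (e \<inter> f) \<noteq> 0" using assms finite_edge by simp
  ultimately show ?thesis by linarith
qed

lemma subfamily_eq_if_covers_pairs:
  assumes "S \<subseteq> E" "covers_pairs V S"
  shows "S = E"
proof
  show "E \<subseteq> S"
  proof
    fix g assume g: "g \<in> E"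
    then obtain x y where xy: "x \<in> g" "y \<in> g" "x \<noteq> y" by (rule edge_has_two_vertices)
    then obtain f where "f \<in> S" "x \<in> f" "y \<in> f"
      using assms(2) edge_subset[OF g] unfolding covers_pairs_def by blast
    moreover have "g = f"
      using edges_eq_if_two_common[of g f x y] xy g assms(1) calculation by auto
    ultimately show "g \<in> S" by simp
  qed
qed (rule assms(1))

lemma card_pairs_across_conflicts:
  assumes "S \<subseteq> E" "e \<in> S"
  shows "card (\<Union>f\<in>conflicts S e. (f \<inter> e) \<times> (f - e)) = (\<Sum>f\<in>conflicts S e. card f - 1)"
proof -
  have conflictsE: "f \<in> E" "f \<noteq> e" "f \<inter> e \<noteq> {}" if "f \<in> conflicts S e" for f
    using that assms(1) unfolding conflicts_def by auto
  have "finite (conflicts S e)"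
    using finite_E assms(1) unfolding conflicts_def by (auto intro: finite_subset)
  then have "card (\<Union>f\<in>conflicts S e. (f \<inter> e) \<times> (f - e))
      = (\<Sum>f\<in>conflicts S e. card ((f \<inter> e) \<times> (f - e)))"
  proof (rule card_UN_disjoint)
    show "\<forall>f\<in>conflicts S e. finite ((f \<inter> e) \<times> (f - e))"
      using conflictsE finite_edge by auto
    show "\<forall>f\<in>conflicts S e. \<forall>g\<in>conflicts S e. f \<noteq> g \<longrightarrow>
        (f \<inter> e) \<times> (f - e) \<inter> (g \<inter> e) \<times> (g - e) = {}"
    proof (intro ballI impI)
      fix f g assume fg: "f \<in> conflicts S e" "g \<in> conflicts S e" "f \<noteq> g"
      show "(f \<inter> e) \<times> (f - e) \<inter> (g \<inter> e) \<times> (g - e) = {}"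
      proof (rule ccontr)
        assume "(f \<inter> e) \<times> (f - e) \<inter> (g \<inter> e) \<times> (g - e) \<noteq> {}"
        then obtain u w where "u \<in> f" "u \<in> e" "w \<in> f" "w \<notin> e" "u \<in> g" "w \<in> g" by auto
        then have "f = g" using edges_eq_if_two_common[of f g u w] conflictsE fg by auto
        then show False using fg(3) by simp
      qed
    qed
  qed
  also have "\<dots> = (\<Sum>f\<in>conflicts S e. card f - 1)"
  proof (rule sum.cong)
    fix f assume f: "f \<in> conflicts S e"
    have "card (f \<inter> e) = 1"
      using card_Int_edges conflictsE[OF f] assms by auto
    moreover have "card (f - e) = card f - card (f \<inter> e)"
      using finite_edge conflictsE[OF f] by (intro card_Diff_subset_Int) auto
    ultimately show "card ((f \<inter> e) \<times> (f - e)) = card f - 1"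
      by (simp add: card_cartesian_product)
  qed simp
  finally show ?thesis .
qed

lemma card_edges_through_meeting_le:
  assumes "e \<in> E" "p \<notin> e"
  shows "card {l\<in>E. p \<in> l \<and> l \<inter> e \<noteq> {}} \<le> card e"
proof -
  define M where "M = {l\<in>E. p \<in> l \<and> l \<inter> e \<noteq> {}}"
  define h where "h l = (SOME u. u \<in> l \<inter> e)" for l
  have h: "h l \<in> l \<inter> e" if "l \<in> M" for l
  proof -
    have "\<exists>u. u \<in> l \<inter> e" using that unfolding M_def by blast
    then show ?thesis unfolding h_def by (rule someI_ex)
  qed
  have "inj_on h M"
  proof (rule inj_onI)
    fix l l' assume l: "l \<in> M" "l' \<in> M" "h l = h l'"
    have "p \<noteq> h l" using h[OF l(1)] assms(2) by blast
    moreover have "l \<in> E" "l' \<in> E" "p \<in> l" "p \<in> l'" using l unfolding M_def by simp_all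
    ultimately show "l = l'"
      using edges_eq_if_two_common[of l l' p "h l"] h[OF l(1)] h[OF l(2)] l(3) by simp
  qed
  moreover have "h ` M \<subseteq> e" using h by blast
  ultimately show ?thesis
    unfolding M_def[symmetric] using finite_edge[OF assms(1)] by (rule card_inj_on_le)
qed

lemma card_le_edges_through_meeting:
  assumes "covers_pairs V E" "l \<in> E" "v \<in> V" "v \<notin> l"
  shows "card l \<le> card {g\<in>E. v \<in> g \<and> g \<inter> l \<noteq> {}}"
proof -
  define r where "r u = (SOME g. g \<in> E \<and> v \<in> g \<and> u \<in> g)" for u
  have r: "r u \<in> E \<and> v \<in> r u \<and> u \<in> r u" if "u \<in> l" for u
  proof -
    have "u \<in> V" "u \<noteq> v" using that assms(2,4) edge_subset by auto
    then have "\<exists>g. g \<in> E \<and> v \<in> g \<and> u \<in> g"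
      using assms(1,3) unfolding covers_pairs_def by blast
    then show ?thesis unfolding r_def by (rule someI_ex)
  qed
  have "inj_on r l"
  proof (rule inj_onI)
    fix u u' assume u: "u \<in> l" "u' \<in> l" "r u = r u'"
    show "u = u'"
    proof (rule ccontr)
      assume "u \<noteq> u'"
      then have "r u = l" using edges_eq_if_two_common[of "r u" l u u'] r u assms(2) by auto
      then show False using r[OF u(1)] assms(4) by simp
    qed
  qed
  moreover have "r ` l \<subseteq> {g\<in>E. v \<in> g \<and> g \<inter> l \<noteq> {}}"
    using r by blast
  ultimately show ?thesis
    using finite_E by (intro card_inj_on_le) simp_all
qed

lemma card_edges_through_ge:
  assumes "covers_pairs V E" "q * q = card V" "\<And>e. e \<in> E \<Longrightarrow> card e = q" "2 \<le> q" "p \<in> V"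
  shows "q + 1 \<le> card {l\<in>E. p \<in> l}"
proof (rule ccontr)
  define L where "L = {l\<in>E. p \<in> l}"
  assume "\<not> q + 1 \<le> card {l\<in>E. p \<in> l}"
  then have "card L \<le> q" unfolding L_def by simp
  have "V - {p} \<subseteq> (\<Union>l\<in>L. l - {p})"
  proof
    fix w assume "w \<in> V - {p}"
    then obtain g where "g \<in> E" "p \<in> g" "w \<in> g"
      using assms(1,5) unfolding covers_pairs_def by blast
    then show "w \<in> (\<Union>l\<in>L. l - {p})" using \<open>w \<in> V - {p}\<close> unfolding L_def by blast
  qed
  then have "card (V - {p}) \<le> card (\<Union>l\<in>L. l - {p})"
    using finite_E finite_edge unfolding L_def by (intro card_mono) auto
  also have "\<dots> \<le> (\<Sum>l\<in>L. card (l - {p}))"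
    using finite_E unfolding L_def by (intro card_UN_le) simp
  also have "\<dots> = card L * (q - 1)"
    using assms(3) finite_edge unfolding L_def by (simp add: card_Diff_singleton)
  also have "\<dots> \<le> q * (q - 1)"
    using \<open>card L \<le> q\<close> by (rule mult_le_mono1)
  also have "\<dots> = q * q - q"
    by (simp add: right_diff_distrib')
  finally have "q * q - 1 \<le> q * q - q"
    using assms(2,5) finite_V by (simp add: card_Diff_singleton)
  moreover have "q * 2 \<le> q * q" using assms(4) by (rule mult_le_mono2)
  ultimately show False using assms(4) by linarith
qed

end

locale degree_bounded_hypergraph = linear_loopless_hypergraph +
  fixes D :: nat
  assumes hdegree_le: "v \<in> V \<Longrightarrow> hdegree E v \<le> D + 1"
begin

lemma card_edges_through_le:
  assumes "S \<subseteq> E" "v \<in> V"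
  shows "card {f\<in>S. v \<in> f} \<le> D + 1"
proof -
  have "card {f\<in>S. v \<in> f} \<le> card {f\<in>E. v \<in> f}"
    using assms(1) finite_E by (intro card_mono) auto
  then show ?thesis using hdegree_le[OF assms(2)] unfolding hdegree_def by linarith
qed

lemma card_conflicts_le:
  assumes "S \<subseteq> E" "e \<in> S"
  shows "card (conflicts S e) \<le> card e * D"
proof -
  have finite_through: "finite {f\<in>S. u \<in> f}" for u
    using finite_E assms(1) by (auto intro: finite_subset)
  have "conflicts S e \<subseteq> (\<Union>u\<in>e. {f\<in>S. u \<in> f} - {e})"
    unfolding conflicts_def by auto
  then have "card (conflicts S e) \<le> card (\<Union>u\<in>e. {f\<in>S. u \<in> f} - {e})"
    using finite_through assms finite_edge by (intro card_mono) auto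
  also have "\<dots> \<le> (\<Sum>u\<in>e. card ({f\<in>S. u \<in> f} - {e}))"
    using assms finite_edge by (intro card_UN_le) auto
  also have "\<dots> \<le> (\<Sum>u\<in>e. D)"
  proof (rule sum_mono)
    fix u assume "u \<in> e"
    then have "card ({f\<in>S. u \<in> f} - {e}) = card {f\<in>S. u \<in> f} - 1"
      using assms(2) finite_through by (simp add: card_Diff_singleton)
    then show "card ({f\<in>S. u \<in> f} - {e}) \<le> D"
      using card_edges_through_le[OF assms(1)] edge_subset assms \<open>u \<in> e\<close> by fastforce
  qed
  finally show ?thesis by simp
qed

lemma dense_minimum_edge:
  assumes "D * D \<le> card V" "S \<subseteq> E" "e \<in> S" "\<And>f. f \<in> S \<Longrightarrow> card e \<le> card f"
    and dense: "card V \<le> card (conflicts S e)"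
  shows "card e * card e = card V"
    and "\<And>f. f \<in> conflicts S e \<Longrightarrow> card f = card e"
    and "\<And>u w. u \<in> e \<Longrightarrow> w \<in> V - e \<Longrightarrow> \<exists>g\<in>S. u \<in> g \<and> w \<in> g"
proof -
  define k m where "k = card e" and "m = card (conflicts S e)"
  define P where "P = (\<Union>f\<in>conflicts S e. (f \<inter> e) \<times> (f - e))"
  have eE: "e \<in> E" using assms(2,3) by blast
  have conflictsE: "f \<in> S" "f \<in> E" "f \<inter> e \<noteq> {}" if "f \<in> conflicts S e" for f
    using that assms(2) unfolding conflicts_def by auto
  have "finite (conflicts S e)"
    using finite_E assms(2) unfolding conflicts_def by (auto intro: finite_subset)
  have k_le: "k - 1 \<le> card f - 1" if "f \<in> conflicts S e" for f
    using assms(4) conflictsE[OF that] unfolding k_def by (simp add: diff_le_mono)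
  have lower: "m * (k - 1) \<le> (\<Sum>f\<in>conflicts S e. card f - 1)"
    using sum_mono[OF k_le] unfolding m_def by simp
  have card_P: "card P = (\<Sum>f\<in>conflicts S e. card f - 1)"
    unfolding P_def using assms(2,3) by (rule card_pairs_across_conflicts)
  have P_sub: "P \<subseteq> e \<times> (V - e)"
    unfolding P_def using conflictsE edge_subset by blast
  have "finite (e \<times> (V - e))" using finite_edge[OF eE] finite_V by simp
  moreover have card_box: "card (e \<times> (V - e)) = k * (card V - k)"
    using edge_subset[OF eE] finite_edge[OF eE] finite_V unfolding k_def
    by (simp add: card_cartesian_product card_Diff_subset)
  ultimately have upper: "card P \<le> k * (card V - k)"
    using P_sub card_mono by metis
  have pairs: "m * (k - 1) \<le> k * (card V - k)" using lower card_P upper by linarith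
  have "m \<le> k * D" using card_conflicts_le[OF assms(2,3)] unfolding k_def m_def .
  have "2 \<le> k" using two_le_card_edge[OF eE] unfolding k_def .
  have "k \<le> card V" using card_mono[OF finite_V edge_subset[OF eE]] unfolding k_def .
  note tight = double_counting_tight[OF pairs \<open>m \<le> k * D\<close> dense[folded m_def] assms(1)
      \<open>2 \<le> k\<close> \<open>k \<le> card V\<close>]
  then show "card e * card e = card V" unfolding k_def by simp
  have sum_eq: "(\<Sum>f\<in>conflicts S e. card f - 1) = (\<Sum>f\<in>conflicts S e. k - 1)"
    using lower card_P upper tight(3) unfolding m_def by simp
  show "card f = card e" if f: "f \<in> conflicts S e" for f
  proof (rule ccontr)
    assume "card f \<noteq> card e"
    moreover have "k \<le> card f" using assms(4) conflictsE(1)[OF f] unfolding k_def .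
    ultimately have "k - 1 < card f - 1" using \<open>2 \<le> k\<close> unfolding k_def by linarith
    then have "(\<Sum>f\<in>conflicts S e. k - 1) < (\<Sum>f\<in>conflicts S e. card f - 1)"
      using \<open>finite (conflicts S e)\<close> k_le f by (intro sum_strict_mono_ex1) auto
    then show False using sum_eq by simp
  qed
  have "P = e \<times> (V - e)"
    using card_subset_eq[OF \<open>finite (e \<times> (V - e))\<close> P_sub] card_P card_box sum_eq tight(1,3)
    unfolding m_def by simp
  then show "\<exists>g\<in>S. u \<in> g \<and> w \<in> g" if "u \<in> e" "w \<in> V - e" for u w
  proof -
    from \<open>P = e \<times> (V - e)\<close> that obtain f where "f \<in> conflicts S e" "u \<in> f" "w \<in> f"
      unfolding P_def by blast
    then show ?thesis using conflictsE(1) by blast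
  qed
qed

lemma dense_subfamily_is_affine_plane:
  assumes "D * D \<le> card V" "S \<subseteq> E" "S \<noteq> {}"
    and dense: "\<And>e. e \<in> S \<Longrightarrow> card V \<le> card (conflicts S e)"
  obtains q where "q * q = card V" "\<And>e. e \<in> S \<Longrightarrow> card e = q" "covers_pairs V S"
proof -
  define q where "q = Min (card ` S)"
  have "finite S" using finite_E assms(2) finite_subset by blast
  then have q_le: "q \<le> card f" if "f \<in> S" for f
    using that unfolding q_def by simp
  have "q \<in> card ` S" unfolding q_def using \<open>finite S\<close> assms(3) by (intro Min_in) auto
  then obtain e where e: "e \<in> S" "card e = q" by blast
  have tight: "card f * card f = card V"
      "\<And>g. g \<in> conflicts S f \<Longrightarrow> card g = q"
      "\<And>u w. u \<in> f \<Longrightarrow> w \<in> V - f \<Longrightarrow> \<exists>g\<in>S. u \<in> g \<and> w \<in> g"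
    if "f \<in> S" "card f = q" for f
    using dense_minimum_edge[OF assms(1,2) \<open>f \<in> S\<close> _ dense[OF \<open>f \<in> S\<close>]] q_le that by auto
  have in_minimum_edge: "\<exists>f\<in>S. card f = q \<and> v \<in> f" if "v \<in> V" for v
  proof (cases "v \<in> e")
    case True
    then show ?thesis using e by blast
  next
    case False
    obtain u where "u \<in> e" using edge_nonempty e(1) assms(2) by blast
    then obtain g where g: "g \<in> S" "u \<in> g" "v \<in> g"
      using tight(3)[OF e] \<open>v \<in> V\<close> False by blast
    then have "g \<in> conflicts S e"
      using \<open>u \<in> e\<close> False unfolding conflicts_def by auto
    then show ?thesis using tight(2)[OF e] g by blast
  qed
  have "q * q = card V" using tight(1)[OF e] e(2) by simp
  moreover have "card g = q" if g: "g \<in> S" for g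
  proof -
    obtain y where "y \<in> g" using edge_nonempty g assms(2) by blast
    then obtain f where f: "f \<in> S" "card f = q" "y \<in> f"
      using in_minimum_edge edge_subset g assms(2) by blast
    show ?thesis
    proof (cases "g = f")
      case False
      then have "g \<in> conflicts S f" using g f(3) \<open>y \<in> g\<close> unfolding conflicts_def by auto
      then show ?thesis using tight(2)[OF f(1,2)] by blast
    qed (use f in simp)
  qed
  moreover have "covers_pairs V S"
    unfolding covers_pairs_def
  proof (intro ballI impI)
    fix v w assume "v \<in> V" "w \<in> V" "v \<noteq> w"
    then obtain f where f: "f \<in> S" "card f = q" "v \<in> f" using in_minimum_edge by blast
    show "\<exists>g\<in>S. v \<in> g \<and> w \<in> g"
    proof (cases "w \<in> f")
      case False
      then show ?thesis using tight(3)[OF f(1,2) f(3)] \<open>w \<in> V\<close> by blast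
    qed (use f in blast)
  qed
  ultimately show ?thesis by (rule that)
qed

lemma affine_plane_colouring:
  assumes "q * q = card V" "E \<noteq> {}" "\<And>e. e \<in> E \<Longrightarrow> card e = q" "covers_pairs V E" "D \<le> q"
  shows "\<exists>c. proper_edge_colouring E (card V) c"
proof -
  obtain e0 where "e0 \<in> E" using assms(2) by blast
  then have "2 \<le> q" using two_le_card_edge assms(3) by metis
  obtain p where "p \<in> V" using edge_nonempty[OF \<open>e0 \<in> E\<close>] edge_subset[OF \<open>e0 \<in> E\<close>] by blast
  define L where "L = {l\<in>E. p \<in> l}"
  have "finite L" using finite_E unfolding L_def by simp
  have "q + 1 \<le> card L"
    unfolding L_def using assms(4,1,3) \<open>2 \<le> q\<close> \<open>p \<in> V\<close> by (rule card_edges_through_ge)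
  have "card L \<le> D + 1" unfolding L_def using card_edges_through_le[OF order_refl \<open>p \<in> V\<close>] .
  moreover have "q * 2 \<le> q * q" using \<open>2 \<le> q\<close> by (rule mult_le_mono2)
  ultimately have "card L \<le> card V" using assms(1,5) \<open>2 \<le> q\<close> by linarith
  have missed: "\<exists>l\<in>L. l = e \<or> l \<inter> e = {}" if "e \<in> E" for e
  proof (cases "p \<in> e")
    case True
    then show ?thesis using that unfolding L_def by blast
  next
    case False
    have "card {l\<in>E. p \<in> l \<and> l \<inter> e \<noteq> {}} < card L"
      using card_edges_through_meeting_le[OF that False] assms(3)[OF that] \<open>q + 1 \<le> card L\<close>
      by linarith
    moreover have "finite {l\<in>E. p \<in> l \<and> l \<inter> e \<noteq> {}}" using finite_E by simp
    ultimately have "\<not> L \<subseteq> {l\<in>E. p \<in> l \<and> l \<inter> e \<noteq> {}}"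
      by (meson card_mono not_le)
    then show ?thesis unfolding L_def by blast
  qed
  define lab where "lab e = (SOME l. l \<in> L \<and> (l = e \<or> l \<inter> e = {}))" for e
  have lab: "lab e \<in> L \<and> (lab e = e \<or> lab e \<inter> e = {})" if "e \<in> E" for e
    unfolding lab_def using missed[OF that] by (rule someI2_bex) simp
  show ?thesis
  proof (rule proper_edge_colouring_relabel[OF \<open>finite L\<close> \<open>card L \<le> card V\<close> conjunct1[OF lab]])
    fix e f assume ef: "e \<in> E" "f \<in> E" "e \<noteq> f" "e \<inter> f \<noteq> {}"
    show "lab e \<noteq> lab f"
    proof
      assume same: "lab e = lab f"
      define l where "l = lab e"
      have "l \<in> E" using lab[OF ef(1)] unfolding l_def L_def by simp
      have "l \<inter> e = {}" "l \<inter> f = {}"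
        using lab[OF ef(1)] lab[OF ef(2)] same ef(3,4) unfolding l_def by auto
      obtain v where "v \<in> e" "v \<in> f" using ef(4) by blast
      then have "v \<in> V" "v \<notin> l"
        using edge_subset[OF ef(1)] \<open>l \<inter> e = {}\<close> by auto
      define M where "M = {g\<in>E. v \<in> g \<and> g \<inter> l \<noteq> {}}"
      have "finite M" using finite_E unfolding M_def by simp
      have "q \<le> card M"
        using card_le_edges_through_meeting[OF assms(4) \<open>l \<in> E\<close> \<open>v \<in> V\<close> \<open>v \<notin> l\<close>]
          assms(3)[OF \<open>l \<in> E\<close>] unfolding M_def by simp
      have "e \<notin> M" "f \<notin> M"
        using \<open>l \<inter> e = {}\<close> \<open>l \<inter> f = {}\<close> unfolding M_def by auto
      then have "card (insert e (insert f M)) = q + 2 + (card M - q)"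
        using \<open>finite M\<close> ef(3) \<open>q \<le> card M\<close> by simp
      moreover have "insert e (insert f M) \<subseteq> {g\<in>E. v \<in> g}"
        using ef(1,2) \<open>v \<in> e\<close> \<open>v \<in> f\<close> unfolding M_def by auto
      then have "card (insert e (insert f M)) \<le> card {g\<in>E. v \<in> g}"
        using finite_E by (intro card_mono) simp_all
      then have "card (insert e (insert f M)) \<le> D + 1"
        using card_edges_through_le[OF order_refl \<open>v \<in> V\<close>] by linarith
      ultimately show False using assms(5) by linarith
    qed
  qed
qed

lemma ex_proper_edge_colouring:
  assumes "D * D \<le> card V"
  shows "\<exists>c. proper_edge_colouring E (card V) c"
proof (cases "\<exists>S\<subseteq>E. S \<noteq> {} \<and> (\<forall>e\<in>S. card V \<le> card (conflicts S e))")
  case True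
  then obtain S where S: "S \<subseteq> E" "S \<noteq> {}" "\<And>e. e \<in> S \<Longrightarrow> card V \<le> card (conflicts S e)"
    by blast
  then obtain q where q: "q * q = card V" "\<And>e. e \<in> S \<Longrightarrow> card e = q" "covers_pairs V S"
    using dense_subfamily_is_affine_plane[OF assms] by blast
  have "S = E" using subfamily_eq_if_covers_pairs S(1) q(3) .
  have "D \<le> q" using assms q(1) by (metis power2_eq_square power2_le_imp_le zero_le)
  then show ?thesis
    using affine_plane_colouring q S(2) \<open>S = E\<close> by blast
next
  case False
  then show ?thesis using finite_E by (intro greedy_edge_colouring) (auto simp: not_le)
qed

end

theorem theorem5p1:
  fixes V :: "'a set" and E :: "'a set set" and n :: nat
  assumes "hypergraph V E"
    and "loopless E"
    and "linear_hg E"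
    and "n = card V"
    and "real (max_degree V E) \<le> sqrt (real n) + 1"
  shows "chromatic_index E \<le> n"
proof -
  define D where "D = max_degree V E - 1"
  have "finite V" using assms(1) unfolding hypergraph_def by simp
  then have "hdegree E v \<le> D + 1" if "v \<in> V" for v
    using hdegree_le_max_degree[OF _ that, of E] unfolding D_def by linarith
  then interpret degree_bounded_hypergraph V E D
    using assms(1-3) by unfold_locales
  have "D * D \<le> card V"
    using pred_square_le_if_le_sqrt_plus_1[OF assms(5)] assms(4) unfolding D_def by simp
  then obtain c where "proper_edge_colouring E (card V) c"
    using ex_proper_edge_colouring by blast
  then show ?thesis using assms(4) by (simp add: chromatic_index_le)
qed

end
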